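(* Let $a,b\in\mathbb{Q}_3$ with $\gamma(a)=0$, $\gamma(b)=m>0$ and $a_0=2$. Then $x=\sum_{k\ge0}x_k3^k\in\mathbb{Z}_3^*$ is a solution of $x^3+ax=b$ if and only if the congruences $$x_0^3+a_0x_0\equiv0\pmod 3,$$ $$x_1a_0+x_0a_1+N_1(x_0)+M_1(x_0)\equiv 0\pmod 3,$$ $$x_ka_0+\dots+x_0a_k+x_0^2x_{k-1}+N_k(x_0,\dots,x_{k-1})+M_k(x_0,\dots,x_{k-1})\equiv0\pmod 3,\quad 2\le k\le m-1,$$ $$x_ka_0+\dots+x_0a_k+x_0^2x_{k-1}+N_k(x_0,\dots,x_{k-1})+M_k(x_0,\dots,x_{k-1})\equiv b_{k-m}\pmod 3,\quad k\ge m,$$ are fulfilled, where the integers $M_k(x_0,\dots,x_{k-1})$ are defined successively by $$x_0^3+2x_0=3M_1(x_0),$$ $$x_1a_0+x_0a_1+N_1(x_0)=-M_1(x_0)+3M_2(x_0,x_1),$$ $$x_ka_0+x_{k-1}a_1+\dots+x_0a_k+x_0^2x_{k-1}+N_k(x_0,\dots,x_{k-1})=-M_k(x_0,\dots,x_{k-1})+3M_{k+1}(x_0,\dots,x_k),\quad 2\le k\le m-1,$$ $$x_ka_0+x_{k-1}a_1+\dots+x_0a_k+x_0^2x_{k-1}+N_k(x_0,\dots,x_{k-1})=b_{k-m}-M_k(x_0,\dots,x_{k-1})+3M_{k+1}(x_0,\dots,x_k),\quad k\ge m.$$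
   Context: Write $a=3^{\gamma(a)}(a_0+a_13+a_23^2+\dots)$, $b=3^{\gamma(b)}(b_0+b_13+b_23^2+\dots)$ in canonical form, with digits $a_j,b_j\in\{0,1,2\}$, $a_0,b_0\ne0$, $\gamma(a),\gamma(b)\in\mathbb{Z}$. $\mathbb{Z}_3^*$ is the set of $3$-adic units; $x\in\mathbb{Z}_3^*$ is written $x=x_0+x_13+x_23^2+\dots$ with $x_j\in\{0,1,2\}$, $x_0\ne0$. For $k\ge1$, $N_k(x_0,\dots,x_{k-1})=\sum \frac{3!}{m_0!\cdots m_{k-1}!}x_0^{m_0}\cdots x_{k-1}^{m_{k-1}}$, the sum over nonnegative integers $m_0,\dots,m_{k-1}$ with $\sum_{i=0}^{k-1}m_i=3$ and $\sum_{i=1}^{k-1}im_i=k$; in particular $N_1=0$. *)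

theory Defs
  imports Main "HOL-Library.FuncSet" "HOL-Number_Theory.Cong"
begin

text \<open>3-adic numbers are represented by their canonical digit sequences
  (digits in {0,1,2}); an element of Z_3 is d_0 + d_1 3 + d_2 3^2 + ... .\<close>

definition digits3 :: "(nat \<Rightarrow> int) \<Rightarrow> bool" where
  "digits3 d \<longleftrightarrow> (\<forall>k. d k \<in> {0,1,2})"

definition trunc3 :: "(nat \<Rightarrow> int) \<Rightarrow> nat \<Rightarrow> int" where
  "trunc3 d n = (\<Sum>k<n. d k * 3 ^ k)"

definition shift3 :: "nat \<Rightarrow> (nat \<Rightarrow> int) \<Rightarrow> nat \<Rightarrow> int" where
  "shift3 m d k = (if k < m then 0 else d (k - m))"

text \<open>x^3 + a x = b holds in Z_3 = lim Z/3^n, where b = 3^m (b_0 + b_1 3 + ...).\<close>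
definition is_solution3 :: "(nat \<Rightarrow> int) \<Rightarrow> (nat \<Rightarrow> int) \<Rightarrow> nat \<Rightarrow> (nat \<Rightarrow> int) \<Rightarrow> bool" where
  "is_solution3 x a m bd \<longleftrightarrow>
     (\<forall>n. [trunc3 x n ^ 3 + trunc3 a n * trunc3 x n = trunc3 (shift3 m bd) n] (mod 3 ^ n))"

definition Ncoef :: "nat \<Rightarrow> (nat \<Rightarrow> int) \<Rightarrow> int" where
  "Ncoef k x = (\<Sum>mm \<in> {mm \<in> {..<k} \<rightarrow>\<^sub>E {0..3::nat}.
        (\<Sum>i<k. mm i) = 3 \<and> (\<Sum>i<k. i * mm i) = k}.
      int ((fact 3 :: nat) div (\<Prod>i<k. fact (mm i))) * (\<Prod>i<k. x i ^ mm i))"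

definition Ecoef :: "(nat \<Rightarrow> int) \<Rightarrow> (nat \<Rightarrow> int) \<Rightarrow> nat \<Rightarrow> int" where
  "Ecoef a x k = (\<Sum>j\<le>k. x j * a (k - j))
      + (if 2 \<le> k then x 0 ^ 2 * x (k - 1) else 0) + Ncoef k x"

text \<open>M_k, defined successively (index 0 unused).\<close>
fun Mseq :: "nat \<Rightarrow> (nat \<Rightarrow> int) \<Rightarrow> (nat \<Rightarrow> int) \<Rightarrow> (nat \<Rightarrow> int) \<Rightarrow> nat \<Rightarrow> int" where
  "Mseq m a bd x 0 = 0"
| "Mseq m a bd x (Suc 0) = (x 0 ^ 3 + 2 * x 0) div 3"
| "Mseq m a bd x (Suc (Suc k)) =
     (Ecoef a x (Suc k) + Mseq m a bd x (Suc k) - shift3 m bd (Suc k)) div 3"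

end

theory Submission
  imports Defs "HOL-Combinatorics.Multiset_Permutations"
begin

text \<open>Let X = sum_{k<n} x_k 3^k and A = sum_{k<n} a_k 3^k. Modulo 3^n, the coefficient of
  3^k in X^3 + A X is sum_{i+j+l=k} x_i x_j x_l + sum_{j<=k} x_j a_{k-j}. Grouping the ordered
  triples with all indices below k by their multiplicities gives the multinomial sum N_k; the
  three remaining triples contribute 3 x_0^2 x_k, which reappears as the term x_0^2 x_k of the
  next coefficient. Hence x is a solution iff 3^n divides sum_{k<n} 3^k (E_k - b'_k) for all n,
  where E_k are the left-hand sides of the congruences and b' are the digits of b. Dividing by 3
  digit by digit, this holds iff every E_k - b'_k + M_k is divisible by 3, the M_k being exactly
  the successive carries.\<close>

lemma sum_mset_eq_sum_count:
  fixes g :: "'a \<Rightarrow> 'b::comm_semiring_1"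
  assumes "finite A" and "set_mset M \<subseteq> A"
  shows "(\<Sum>i\<in>#M. g i) = (\<Sum>i\<in>A. of_nat (count M i) * g i)"
  using assms(2)
proof (induction M)
  case empty
  then show ?case by simp
next
  case (add a M)
  have "(\<Sum>i\<in>A. of_nat (count (add_mset a M) i) * g i)
      = (\<Sum>i\<in>A. of_nat (count M i) * g i + (if i = a then g i else 0))"
    by (rule sum.cong) (auto simp: algebra_simps)
  then show ?case using add assms(1) by (simp add: sum.distrib add.commute)
qed

lemma prod_mset_eq_prod_count:
  fixes g :: "'a \<Rightarrow> 'b::comm_monoid_mult"
  assumes "finite A" and "set_mset M \<subseteq> A"
  shows "(\<Prod>i\<in>#M. g i) = (\<Prod>i\<in>A. g i ^ count M i)"
  unfolding image_prod_mset_multiplicity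
  by (rule prod.mono_neutral_left) (use assms in \<open>auto simp: not_in_iff\<close>)

text \<open>Members of \<open>A \<rightarrow>\<^sub>E B\<close> are \<open>undefined\<close>, not 0, outside \<open>A\<close>;
  hence the cut-off in \<open>M\<close>.\<close>

lemma words_with_letter_counts:
  fixes A :: "nat set"
  assumes A: "finite A" and mm: "mm \<in> A \<rightarrow>\<^sub>E {0..d}"
    and len: "(\<Sum>i\<in>A. mm i) = d" and wt: "(\<Sum>i\<in>A. i * mm i) = s"
  defines "M \<equiv> Abs_multiset (\<lambda>i. if i \<in> A then mm i else 0)"
  shows "{xs. (length xs = d \<and> set xs \<subseteq> A \<and> sum_list xs = s)
              \<and> restrict (count (mset xs)) A = mm} = permutations_of_multiset M"
    and "set_mset M \<subseteq> A" and "\<And>i. i \<in> A \<Longrightarrow> count M i = mm i"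
proof -
  have count_M: "count M = (\<lambda>i. if i \<in> A then mm i else 0)"
    unfolding M_def by (rule count_Abs_multiset, rule finite_subset[OF _ A]) auto
  then show M_A: "set_mset M \<subseteq> A"
    by (auto simp: set_mset_def split: if_splits)
  show "\<And>i. i \<in> A \<Longrightarrow> count M i = mm i" by (simp add: count_M)
  show "{xs. (length xs = d \<and> set xs \<subseteq> A \<and> sum_list xs = s)
              \<and> restrict (count (mset xs)) A = mm} = permutations_of_multiset M"
  proof (intro set_eqI iffI)
    fix xs assume xs: "xs \<in> {xs. (length xs = d \<and> set xs \<subseteq> A \<and> sum_list xs = s)
              \<and> restrict (count (mset xs)) A = mm}"
    have "count (mset xs) i = count M i" for i
      using xs by (cases "i \<in> A") (auto simp: count_M fun_eq_iff dest: spec[of _ i])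
    then show "xs \<in> permutations_of_multiset M"
      by (simp add: permutations_of_multiset_def multiset_eq_iff)
  next
    fix xs assume "xs \<in> permutations_of_multiset M"
    then have xs: "mset xs = M" by (simp add: permutations_of_multiset_def)
    have "length xs = (\<Sum>i\<in>A. count M i)"
      using sum_mset_eq_sum_count[OF A M_A, of "\<lambda>_. 1::nat"] xs by (simp flip: size_mset)
    moreover have "sum_list xs = (\<Sum>i\<in>A. count M i * i)"
      using sum_mset_eq_sum_count[OF A M_A, of "\<lambda>i. i"] xs by (simp flip: sum_mset_sum_list)
    moreover have "restrict (count (mset xs)) A = mm"
      using mm xs by (auto simp: count_M restrict_def fun_eq_iff PiE_def extensional_def)
    ultimately show "xs \<in> {xs. (length xs = d \<and> set xs \<subseteq> A \<and> sum_list xs = s)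
              \<and> restrict (count (mset xs)) A = mm}"
      using xs M_A len wt count_M by (auto simp: mult.commute)
  qed
qed

lemma sum_words_with_letter_counts:
  fixes x :: "nat \<Rightarrow> 'b::comm_semiring_1" and A :: "nat set"
  assumes A: "finite A" and mm: "mm \<in> A \<rightarrow>\<^sub>E {0..d}"
    and len: "(\<Sum>i\<in>A. mm i) = d" and wt: "(\<Sum>i\<in>A. i * mm i) = s"
  shows "(\<Sum>xs | (length xs = d \<and> set xs \<subseteq> A \<and> sum_list xs = s)
              \<and> restrict (count (mset xs)) A = mm. \<Prod>i\<leftarrow>xs. x i)
       = of_nat (fact d div (\<Prod>i\<in>A. fact (mm i))) * (\<Prod>i\<in>A. x i ^ mm i)"
proof -
  define M where "M = Abs_multiset (\<lambda>i. if i \<in> A then mm i else 0)"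
  note fiber = words_with_letter_counts[OF A mm len wt, folded M_def]
  have "size M = d"
    using sum_mset_eq_sum_count[OF A fiber(2), of "\<lambda>_. 1::nat"] fiber(3) len by simp
  moreover have "(\<Prod>i\<in>set_mset M. fact (count M i)) = (\<Prod>i\<in>A. fact (mm i) :: nat)"
  proof (rule prod.mono_neutral_cong_left)
    show "\<forall>i\<in>A - set_mset M. fact (mm i) = (1::nat)"
      using fiber(3) by (auto simp: not_in_iff)
  qed (use A fiber in auto)
  ultimately have counted: "card (permutations_of_multiset M) * (\<Prod>i\<in>A. fact (mm i)) = fact d"
    using card_permutations_of_multiset_aux[of M] by simp
  have "(\<Prod>i\<in>A. fact (mm i)) > (0::nat)"
    by (simp add: prod_pos)
  then have card: "card (permutations_of_multiset M) = fact d div (\<Prod>i\<in>A. fact (mm i))"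
    unfolding counted[symmetric] by simp
  have "(\<Prod>i\<leftarrow>xs. x i) = (\<Prod>i\<in>A. x i ^ mm i)" if "xs \<in> permutations_of_multiset M" for xs
  proof -
    have "M = mset xs"
      using that by (simp add: permutations_of_multiset_def)
    then have "(\<Prod>i\<leftarrow>xs. x i) = (\<Prod>i\<in>#M. x i)"
      by (simp add: prod_mset_prod_list flip: mset_map)
    also have "\<dots> = (\<Prod>i\<in>A. x i ^ mm i)"
      unfolding prod_mset_eq_prod_count[OF A fiber(2)] by (rule prod.cong) (simp_all add: fiber(3))
    finally show ?thesis .
  qed
  then show ?thesis
    unfolding fiber(1) by (simp add: card)
qed

lemma sum_words_by_letter_counts:
  fixes x :: "nat \<Rightarrow> 'b::comm_semiring_1" and A :: "nat set"
  assumes A: "finite A"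
  shows "(\<Sum>xs | length xs = d \<and> set xs \<subseteq> A \<and> sum_list xs = s. \<Prod>i\<leftarrow>xs. x i)
       = (\<Sum>mm \<in> {mm \<in> A \<rightarrow>\<^sub>E {0..d}. (\<Sum>i\<in>A. mm i) = d \<and> (\<Sum>i\<in>A. i * mm i) = s}.
            of_nat (fact d div (\<Prod>i\<in>A. fact (mm i))) * (\<Prod>i\<in>A. x i ^ mm i))"
proof -
  define W where "W = {xs. length xs = d \<and> set xs \<subseteq> A \<and> sum_list xs = s}"
  define S where "S = {mm \<in> A \<rightarrow>\<^sub>E {0..d}. (\<Sum>i\<in>A. mm i) = d \<and> (\<Sum>i\<in>A. i * mm i) = s}"
  have "finite W"
    by (rule finite_subset[OF _ finite_lists_length_eq[OF A, of d]]) (auto simp: W_def)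
  moreover have "finite S"
    by (rule finite_subset[OF _ finite_PiE[OF A, of "\<lambda>_. {0..d}"]]) (auto simp: S_def)
  moreover have "restrict (count (mset xs)) A \<in> S" if "xs \<in> W" for xs
  proof -
    have xs_A: "set_mset (mset xs) \<subseteq> A" using that by (simp add: W_def)
    have "count (mset xs) i \<le> d" for i
      using count_le_size[of "mset xs" i] that by (simp add: W_def)
    moreover have "(\<Sum>i\<in>A. count (mset xs) i) = d"
      using sum_mset_eq_sum_count[OF A xs_A, of "\<lambda>_. 1::nat"] that by (simp add: W_def)
    moreover have "(\<Sum>i\<in>A. i * count (mset xs) i) = s"
      using sum_mset_eq_sum_count[OF A xs_A, of "\<lambda>i. i"] that
      by (simp add: W_def sum_mset_sum_list mult.commute)
    ultimately show ?thesis by (simp add: S_def)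
  qed
  ultimately have "(\<Sum>xs\<in>W. \<Prod>i\<leftarrow>xs. x i)
      = (\<Sum>mm\<in>S. \<Sum>xs \<in> {xs \<in> W. restrict (count (mset xs)) A = mm}. \<Prod>i\<leftarrow>xs. x i)"
    by (simp add: sum.group image_subset_iff)
  also have "\<dots> = (\<Sum>mm\<in>S. of_nat (fact d div (\<Prod>i\<in>A. fact (mm i))) * (\<Prod>i\<in>A. x i ^ mm i))"
  proof (rule sum.cong[OF refl])
    fix mm assume "mm \<in> S"
    then show "(\<Sum>xs \<in> {xs \<in> W. restrict (count (mset xs)) A = mm}. \<Prod>i\<leftarrow>xs. x i)
        = of_nat (fact d div (\<Prod>i\<in>A. fact (mm i))) * (\<Prod>i\<in>A. x i ^ mm i)"
      unfolding W_def mem_Collect_eq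
      by (intro sum_words_with_letter_counts[OF A]) (simp_all add: S_def)
  qed
  finally show ?thesis by (simp only: W_def S_def)
qed

lemma power_sum_eq_sum_words:
  fixes f :: "'a \<Rightarrow> 'b::comm_semiring_1"
  assumes "finite A"
  shows "(\<Sum>i\<in>A. f i) ^ d = (\<Sum>xs | set xs \<subseteq> A \<and> length xs = d. \<Prod>i\<leftarrow>xs. f i)"
proof (induction d)
  case 0
  have "{xs. set xs \<subseteq> A \<and> length xs = 0} = {[]}" by auto
  then show ?case by simp
next
  case (Suc d)
  define W where "W = {xs. set xs \<subseteq> A \<and> length xs = d}"
  have "inj_on (\<lambda>(xs, i). i # xs) (W \<times> A)"
    by (auto simp: inj_on_def)
  then have "(\<Sum>xs | set xs \<subseteq> A \<and> length xs = Suc d. \<Prod>i\<leftarrow>xs. f i)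
      = (\<Sum>(xs, i) \<in> W \<times> A. f i * (\<Prod>j\<leftarrow>xs. f j))"
    by (simp add: W_def lists_length_Suc_eq sum.reindex case_prod_unfold)
  also have "\<dots> = (\<Sum>xs\<in>W. \<Sum>i\<in>A. f i * (\<Prod>j\<leftarrow>xs. f j))"
    by (rule sum.cartesian_product[symmetric])
  also have "\<dots> = (\<Sum>i\<in>A. f i) * (\<Sum>xs\<in>W. \<Prod>j\<leftarrow>xs. f j)"
    by (simp add: sum_product sum.swap[of _ W])
  finally show ?case by (simp add: Suc W_def)
qed

lemma prod_list_times_power:
  fixes x :: "nat \<Rightarrow> 'a::comm_monoid_mult"
  shows "(\<Prod>i\<leftarrow>xs. x i * c ^ i) = (\<Prod>i\<leftarrow>xs. x i) * c ^ sum_list xs"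
  by (induction xs) (simp_all add: power_add mult_ac)

lemma sum_grouped_by_exponent_cong:
  fixes f :: "'a \<Rightarrow> int" and h :: "'a \<Rightarrow> nat"
  assumes "finite I"
  shows "[(\<Sum>t\<in>I. f t * c ^ h t) = (\<Sum>k<n. c ^ k * (\<Sum>t | t \<in> I \<and> h t = k. f t))] (mod c ^ n)"
proof -
  let ?g = "\<lambda>t. f t * c ^ h t"
  let ?low = "{t \<in> I. h t < n}" and ?high = "{t \<in> I. \<not> h t < n}"
  have "(\<Sum>t\<in>I. ?g t) = (\<Sum>t\<in>?low \<union> ?high. ?g t)"
    by (rule sum.cong) auto
  also have "\<dots> = (\<Sum>t\<in>?low. ?g t) + (\<Sum>t\<in>?high. ?g t)"
    by (rule sum.union_disjoint) (use assms in auto)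
  finally have split: "(\<Sum>t\<in>I. ?g t) = (\<Sum>t\<in>?low. ?g t) + (\<Sum>t\<in>?high. ?g t)" .
  have high: "c ^ n dvd (\<Sum>t\<in>?high. ?g t)"
    by (rule dvd_sum) (auto intro!: dvd_mult le_imp_power_dvd)
  have "(\<Sum>t\<in>?low. ?g t) = (\<Sum>k<n. \<Sum>t | t \<in> ?low \<and> h t = k. ?g t)"
    by (rule sum.group[symmetric]) (use assms in auto)
  also have "\<dots> = (\<Sum>k<n. c ^ k * (\<Sum>t | t \<in> I \<and> h t = k. f t))"
  proof (rule sum.cong[OF refl])
    fix k assume "k \<in> {..<n}"
    then have "{t. t \<in> ?low \<and> h t = k} = {t. t \<in> I \<and> h t = k}" by auto
    then show "(\<Sum>t | t \<in> ?low \<and> h t = k. ?g t) = c ^ k * (\<Sum>t | t \<in> I \<and> h t = k. f t)"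
      by (simp add: sum_distrib_left mult.commute)
  qed
  finally have low: "(\<Sum>t\<in>?low. ?g t) = (\<Sum>k<n. c ^ k * (\<Sum>t | t \<in> I \<and> h t = k. f t))" .
  show ?thesis
    unfolding cong_iff_dvd_diff split low using high by simp
qed

lemma sum_power_telescope:
  fixes y :: "nat \<Rightarrow> 'a::comm_ring_1"
  assumes "y 0 = 0"
  shows "(\<Sum>k<n. c ^ k * (c * y k - y (k - 1))) = c ^ n * y (n - 1)"
proof (induction n)
  case 0
  then show ?case using assms by simp
next
  case (Suc n)
  then show ?case by (cases n) (simp_all add: algebra_simps)
qed

lemma weighted_sum_eq_carry:
  fixes p :: int and d M :: "nat \<Rightarrow> int"
  assumes "M 0 = 0" and "\<And>k. M (Suc k) = (d k + M k) div p"
    and "\<forall>k<n. p dvd d k + M k"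
  shows "(\<Sum>k<n. p ^ k * d k) = p ^ n * M n"
  using assms(3)
proof (induction n)
  case 0
  then show ?case using assms(1) by simp
next
  case (Suc n)
  then have "(\<Sum>k<Suc n. p ^ k * d k) = p ^ n * (d n + M n)"
    by (simp add: algebra_simps)
  also have "\<dots> = p ^ Suc n * M (Suc n)"
    using Suc.prems assms(2)[of n] by simp
  finally show ?case .
qed

lemma dvd_weighted_sums_iff_carries:
  fixes p :: int and d M :: "nat \<Rightarrow> int"
  assumes "p \<noteq> 0" and "M 0 = 0" and "\<And>k. M (Suc k) = (d k + M k) div p"
  shows "(\<forall>n. p ^ n dvd (\<Sum>k<n. p ^ k * d k)) \<longleftrightarrow> (\<forall>k. p dvd d k + M k)"
proof
  assume partial: "\<forall>n. p ^ n dvd (\<Sum>k<n. p ^ k * d k)"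
  have "\<forall>j<k. p dvd d j + M j" for k
  proof (induction k)
    case (Suc k)
    have "(\<Sum>j<Suc k. p ^ j * d j) = p ^ k * (d k + M k)"
      using weighted_sum_eq_carry[OF assms(2,3) Suc.IH] by (simp add: algebra_simps)
    then have "p ^ k * p dvd p ^ k * (d k + M k)"
      using partial by (metis power_Suc2)
    then have "p dvd d k + M k"
      using assms(1) by simp
    with Suc.IH show ?case by (auto simp: less_Suc_eq)
  qed simp
  then show "\<forall>k. p dvd d k + M k" by blast
next
  assume "\<forall>k. p dvd d k + M k"
  then show "\<forall>n. p ^ n dvd (\<Sum>k<n. p ^ k * d k)"
    using weighted_sum_eq_carry[OF assms(2,3)] by simp
qed

definition cube_coeff :: "(nat \<Rightarrow> int) \<Rightarrow> nat \<Rightarrow> int" where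
  "cube_coeff x k = (\<Sum>xs | length xs = 3 \<and> sum_list xs = k. \<Prod>i\<leftarrow>xs. x i)"

lemma Ncoef_eq_sum_words:
  "Ncoef k x = (\<Sum>xs | length xs = 3 \<and> set xs \<subseteq> {..<k} \<and> sum_list xs = k. \<Prod>i\<leftarrow>xs. x i)"
  by (simp add: Ncoef_def sum_words_by_letter_counts)

lemma cube_coeff_0: "cube_coeff x 0 = x 0 ^ 3"
proof -
  have "{xs. length xs = 3 \<and> sum_list xs = (0::nat)} = {[0, 0, 0]}"
    by (auto simp: numeral_3_eq_3 length_Suc_conv)
  then show ?thesis
    unfolding cube_coeff_def by (simp add: power3_eq_cube mult.assoc)
qed

lemma cube_coeff_eq_Ncoef:
  assumes "k \<ge> 1"
  shows "cube_coeff x k = Ncoef k x + 3 * x 0 ^ 2 * x k"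
proof -
  define W where "W = {xs. length xs = 3 \<and> set xs \<subseteq> {..<k} \<and> sum_list xs = k}"
  define E where "E = {[k, 0, 0], [0, k, 0], [0, 0, k]}"
  have "{xs. length xs = 3 \<and> sum_list xs = k} = W \<union> E"
    using assms by (auto simp: W_def E_def numeral_3_eq_3 length_Suc_conv)
  then have "cube_coeff x k = (\<Sum>xs\<in>W \<union> E. \<Prod>i\<leftarrow>xs. x i)"
    unfolding cube_coeff_def by (simp only:)
  also have "\<dots> = (\<Sum>xs\<in>W. \<Prod>i\<leftarrow>xs. x i) + (\<Sum>xs\<in>E. \<Prod>i\<leftarrow>xs. x i)"
  proof (rule sum.union_disjoint)
    show "finite W"
      by (rule finite_subset[OF _ finite_lists_length_eq[of "{..<k}" 3]]) (auto simp: W_def)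
  qed (auto simp: W_def E_def)
  also have "(\<Sum>xs\<in>E. \<Prod>i\<leftarrow>xs. x i) = 3 * x 0 ^ 2 * x k"
    using assms by (simp add: E_def power2_eq_square)
  finally show ?thesis
    by (simp add: Ncoef_eq_sum_words W_def)
qed

lemma trunc3_cube_cong: "[trunc3 x n ^ 3 = (\<Sum>k<n. 3 ^ k * cube_coeff x k)] (mod 3 ^ n)"
proof -
  define W where "W = {xs. set xs \<subseteq> {..<n} \<and> length xs = 3}"
  have "trunc3 x n ^ 3 = (\<Sum>xs\<in>W. (\<Prod>i\<leftarrow>xs. x i) * 3 ^ sum_list xs)"
    by (simp add: trunc3_def W_def power_sum_eq_sum_words prod_list_times_power)
  moreover have "{xs. xs \<in> W \<and> sum_list xs = k} = {xs. length xs = 3 \<and> sum_list xs = k}" if "k < n" for k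
    using that by (auto simp: W_def dest: member_le_sum_list)
  ultimately show ?thesis
    using sum_grouped_by_exponent_cong[of W "\<lambda>xs. \<Prod>i\<leftarrow>xs. x i" 3 sum_list n]
    by (simp add: W_def finite_lists_length_eq cube_coeff_def)
qed

lemma trunc3_mult_cong:
  "[trunc3 a n * trunc3 x n = (\<Sum>k<n. 3 ^ k * (\<Sum>j\<le>k. x j * a (k - j)))] (mod 3 ^ n)"
proof -
  define P where "P = {..<n} \<times> {..<n}"
  have "trunc3 a n * trunc3 x n = (\<Sum>t\<in>P. a (fst t) * x (snd t) * 3 ^ (fst t + snd t))"
    by (simp add: trunc3_def P_def sum_product sum.cartesian_product power_add mult_ac case_prod_unfold)
  also have "[\<dots> = (\<Sum>k<n. 3 ^ k * (\<Sum>t | t \<in> P \<and> fst t + snd t = k. a (fst t) * x (snd t)))] (mod 3 ^ n)"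
    by (rule sum_grouped_by_exponent_cong) (simp add: P_def)
  also have "(\<Sum>k<n. 3 ^ k * (\<Sum>t | t \<in> P \<and> fst t + snd t = k. a (fst t) * x (snd t)))
      = (\<Sum>k<n. 3 ^ k * (\<Sum>j\<le>k. x j * a (k - j)))"
  proof (rule sum.cong[OF refl])
    fix k assume "k \<in> {..<n}"
    then have "{t. t \<in> P \<and> fst t + snd t = k} = (\<lambda>j. (k - j, j)) ` {..k}"
      by (auto simp: P_def image_iff intro!: bexI[where P = "\<lambda>j. _ = (k - j, j)"])
    moreover have "inj_on (\<lambda>j. (k - j, j)) {..k}" by (auto simp: inj_on_def)
    ultimately show "3 ^ k * (\<Sum>t | t \<in> P \<and> fst t + snd t = k. a (fst t) * x (snd t))
        = 3 ^ k * (\<Sum>j\<le>k. x j * a (k - j))"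
      by (simp add: sum.reindex mult.commute)
  qed
  finally show ?thesis .
qed

text \<open>For \<open>k = 0\<close> this is not
  \<open>Ecoef a x 0\<close>, which lacks the term \<open>x\<^sub>0\<^sup>3\<close> (since \<open>N\<^sub>0 = 0\<close>).\<close>

definition cubic_coeff :: "(nat \<Rightarrow> int) \<Rightarrow> (nat \<Rightarrow> int) \<Rightarrow> nat \<Rightarrow> int" where
  "cubic_coeff a x k = (if k = 0 then x 0 ^ 3 + a 0 * x 0 else Ecoef a x k)"

lemma trunc3_cubic_cong:
  "[trunc3 x n ^ 3 + trunc3 a n * trunc3 x n = (\<Sum>k<n. 3 ^ k * cubic_coeff a x k)] (mod 3 ^ n)"
proof -
  define lin where "lin k = (\<Sum>j\<le>k. x j * a (k - j))" for k
  define y where "y k = (if k = 0 then 0 else x 0 ^ 2 * x k)" for k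
  \<comment> \<open>The part \<open>3 x\<^sub>0\<^sup>2 x\<^sub>k\<close> of the \<open>k\<close>-th coefficient of the cube is carried
    into the next one.\<close>
  have coeff: "cube_coeff x k + lin k = cubic_coeff a x k + (3 * y k - y (k - 1))" for k
    by (cases "k = 0"; cases "k = 1")
      (simp_all add: lin_def y_def cubic_coeff_def Ecoef_def cube_coeff_0 cube_coeff_eq_Ncoef)
  have "[trunc3 x n ^ 3 + trunc3 a n * trunc3 x n
      = (\<Sum>k<n. 3 ^ k * cube_coeff x k) + (\<Sum>k<n. 3 ^ k * lin k)] (mod 3 ^ n)"
    unfolding lin_def by (intro cong_add trunc3_cube_cong trunc3_mult_cong)
  also have "(\<Sum>k<n. 3 ^ k * cube_coeff x k) + (\<Sum>k<n. 3 ^ k * lin k)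
      = (\<Sum>k<n. 3 ^ k * (cubic_coeff a x k + (3 * y k - y (k - 1))))"
    by (simp add: sum.distrib[symmetric] distrib_left[symmetric] coeff)
  also have "\<dots> = (\<Sum>k<n. 3 ^ k * cubic_coeff a x k) + 3 ^ n * y (n - 1)"
    using sum_power_telescope[of y 3 n] by (simp add: y_def distrib_left sum.distrib)
  also have "[\<dots> = (\<Sum>k<n. 3 ^ k * cubic_coeff a x k)] (mod 3 ^ n)"
    by (simp add: cong_iff_dvd_diff)
  finally show ?thesis .
qed

lemma is_solution3_iff:
  "is_solution3 x a m bd \<longleftrightarrow>
    (\<forall>n. 3 ^ n dvd (\<Sum>k<n. 3 ^ k * (cubic_coeff a x k - shift3 m bd k)))"
proof -
  have "[trunc3 x n ^ 3 + trunc3 a n * trunc3 x n = trunc3 (shift3 m bd) n] (mod 3 ^ n)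
    \<longleftrightarrow> [(\<Sum>k<n. 3 ^ k * cubic_coeff a x k) = (\<Sum>k<n. 3 ^ k * shift3 m bd k)] (mod 3 ^ n)" for n
    using trunc3_cubic_cong[of x n a]
    by (auto simp: trunc3_def mult.commute intro: cong_trans cong_sym)
  then show ?thesis
    by (simp add: is_solution3_def cong_iff_dvd_diff right_diff_distrib sum_subtractf)
qed

lemma Mseq_Suc:
  assumes "m > 0" and "a 0 = 2"
  shows "Mseq m a bd x (Suc k) = (cubic_coeff a x k - shift3 m bd k + Mseq m a bd x k) div 3"
  using assms by (cases k) (simp_all add: cubic_coeff_def shift3_def algebra_simps)

theorem theorem3p2:
  fixes a bd x :: "nat \<Rightarrow> int" and m :: nat
  assumes "digits3 a" and "a 0 = 2"
    and "digits3 bd" and "bd 0 \<noteq> 0" and "m > 0"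
    and "digits3 x" and "x 0 \<noteq> 0"
  shows "is_solution3 x a m bd \<longleftrightarrow>
    ([x 0 ^ 3 + a 0 * x 0 = 0] (mod 3) \<and>
     (\<forall>k\<ge>1. [Ecoef a x k + Mseq m a bd x k = shift3 m bd k] (mod 3)))"
proof -
  \<comment> \<open>Only \<open>a\<^sub>0 = 2\<close> (it fixes \<open>M\<^sub>1\<close>) and \<open>m > 0\<close> are used: the equivalence
    holds for arbitrary integer sequences, digits or not.\<close>
  let ?carry = "\<lambda>k. 3 dvd cubic_coeff a x k - shift3 m bd k + Mseq m a bd x k"
  have "is_solution3 x a m bd \<longleftrightarrow> (\<forall>k. ?carry k)"
    unfolding is_solution3_iff
    by (rule dvd_weighted_sums_iff_carries) (simp_all add: Mseq_Suc \<open>m > 0\<close> \<open>a 0 = 2\<close>)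
  also have "(\<forall>k. ?carry k) \<longleftrightarrow> ?carry 0 \<and> (\<forall>k\<ge>1. ?carry k)"
    by (metis less_one not_less)
  finally show ?thesis
    using \<open>m > 0\<close> by (simp add: cubic_coeff_def shift3_def cong_iff_dvd_diff algebra_simps)
qed

end
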